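(* The edge topology is not symmetric in general: there exist a scene (number of agents $N_a\ge 2$, horizon $T_f\ge 2$, current poses $(p_n,\theta_n)\in\mathbb{R}^2\times\mathbb{R}$ and future trajectories $Y_n=(y_n^1,\dots,y_n^{T_f})$, $y_n^t\in\mathbb{R}^2$) and indices $i\neq j$ such that $e_{ij}\neq e_{ji}$, where $e_{ij}$ is defined as in the context.
   Context: For $\alpha\in\mathbb{R}$, $R(\alpha)$ denotes the $2\times 2$ counterclockwise rotation matrix by angle $\alpha$. The local coordinate map of agent $n$ is $f^n(y)=R(-\theta_n)(y-p_n)$ for $y\in\mathbb{R}^2$, and the lateral coordinate $\ell^n(y)$ is the second component of $f^n(y)$. For agents $i,j$, an observer agent $n$, and a step $t\in\{2,\dots,T_f\}$, the intertwine indicator $I^{(n)}_t(i,j)$ equals $1$ if the closed line segment in $\mathbb{R}^2$ from $(t-1,\ell^n(y_i^{t-1}))$ to $(t,\ell^n(y_i^{t}))$ intersects the closed line segment from $(t-1,\ell^n(y_j^{t-1}))$ to $(t,\ell^n(y_j^{t}))$, and $0$ otherwise. The edge topology is $e_{ij}=\max_{2\le t\le T_f} I^{(i)}_t(i,j)\in\{0,1\}$, i.e. the interaction of agent $j$ with agent $i$ is assessed in agent $i$'s local frame. *)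

theory Defs
  imports "HOL-Analysis.Analysis"
begin

definition rot :: "real \<Rightarrow> real \<times> real \<Rightarrow> real \<times> real" where
  "rot \<alpha> v = (cos \<alpha> * fst v - sin \<alpha> * snd v, sin \<alpha> * fst v + cos \<alpha> * snd v)"

definition local_coord :: "real \<times> real \<Rightarrow> real \<Rightarrow> real \<times> real \<Rightarrow> real \<times> real" where
  "local_coord p \<theta> y = rot (- \<theta>) (y - p)"

definition lateral :: "real \<times> real \<Rightarrow> real \<Rightarrow> real \<times> real \<Rightarrow> real" where
  "lateral p \<theta> y = snd (local_coord p \<theta> y)"

text \<open>Intertwine indicator I^(n)_t(i,j). Scene: p n, th n are the pose of agent n,
  y n t is the position of agent n at future step t.\<close>
definition intertwine ::
  "(nat \<Rightarrow> real \<times> real) \<Rightarrow> (nat \<Rightarrow> real) \<Rightarrow> (nat \<Rightarrow> nat \<Rightarrow> real \<times> real)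
    \<Rightarrow> nat \<Rightarrow> nat \<Rightarrow> nat \<Rightarrow> nat \<Rightarrow> nat" where
  "intertwine p th y n t i j =
     (if closed_segment (real (t - 1), lateral (p n) (th n) (y i (t - 1)))
                        (real t, lateral (p n) (th n) (y i t))
         \<inter> closed_segment (real (t - 1), lateral (p n) (th n) (y j (t - 1)))
                        (real t, lateral (p n) (th n) (y j t)) \<noteq> {}
      then 1 else 0)"

definition edge ::
  "nat \<Rightarrow> (nat \<Rightarrow> real \<times> real) \<Rightarrow> (nat \<Rightarrow> real) \<Rightarrow> (nat \<Rightarrow> nat \<Rightarrow> real \<times> real)
    \<Rightarrow> nat \<Rightarrow> nat \<Rightarrow> nat" where
  "edge Tf p th y i j = Max ((\<lambda>t. intertwine p th y i t i j) ` {2..Tf})"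

end

theory Submission
  imports Defs
begin

text \<open>Two stationary agents at (0,0) and (0,1). Agent 0 faces along the x-axis, so in its frame
  the agents keep the distinct lateral offsets 0 and 1 and their lateral tracks never meet.
  Agent 1 faces along the y-axis, so both agents lie on its heading line, have lateral
  coordinate 0, and their tracks coincide.\<close>

lemma lateral_eq: "lateral p \<theta> y = cos \<theta> * (snd y - snd p) - sin \<theta> * (fst y - fst p)"
  by (simp add: lateral_def local_coord_def rot_def)

lemma snd_in_horizontal_segment:
  fixes a s t :: real
  assumes "z \<in> closed_segment (s, a) (t, a)"
  shows "snd z = a"
proof -
  from assms obtain u where "z = (1 - u) *\<^sub>R (s, a) + u *\<^sub>R (t, a)"
    by (auto simp: closed_segment_def)
  then show ?thesis
    by (simp add: algebra_simps)
qed

lemma horizontal_segments_meet_iff: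
  fixes a b s t :: real
  shows "closed_segment (s, a) (t, a) \<inter> closed_segment (s, b) (t, b) \<noteq> {} \<longleftrightarrow> a = b"
proof
  assume "closed_segment (s, a) (t, a) \<inter> closed_segment (s, b) (t, b) \<noteq> {}"
  then obtain z where "z \<in> closed_segment (s, a) (t, a)" and "z \<in> closed_segment (s, b) (t, b)"
    by blast
  then show "a = b"
    using snd_in_horizontal_segment by metis
qed auto

lemma intertwine_stationary:
  assumes "y i (t - 1) = y i t" and "y j (t - 1) = y j t"
  shows "intertwine p th y n t i j =
    (if lateral (p n) (th n) (y i t) = lateral (p n) (th n) (y j t) then 1 else 0)"
  using assms by (simp add: intertwine_def horizontal_segments_meet_iff)

lemma edge_horizon_two: "edge 2 p th y i j = intertwine p th y i 2 i j"
  by (simp add: edge_def)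

theorem theorem3:
  shows "\<exists>(Na::nat) (Tf::nat) (p::nat \<Rightarrow> real \<times> real) (th::nat \<Rightarrow> real)
            (y::nat \<Rightarrow> nat \<Rightarrow> real \<times> real) (i::nat) (j::nat).
           2 \<le> Na \<and> 2 \<le> Tf \<and> i < Na \<and> j < Na \<and> i \<noteq> j \<and>
           edge Tf p th y i j \<noteq> edge Tf p th y j i"
proof -
  define p :: "nat \<Rightarrow> real \<times> real" where "p = (\<lambda>_. 0)"
  define th :: "nat \<Rightarrow> real" where "th = (\<lambda>n. real n * pi / 2)"
  define y :: "nat \<Rightarrow> nat \<Rightarrow> real \<times> real" where "y = (\<lambda>n _. (0, real n))"
  have "edge 2 p th y 0 1 = 0"
    by (simp add: edge_horizon_two intertwine_stationary lateral_eq p_def th_def y_def)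
  moreover have "edge 2 p th y 1 0 = 1"
    by (simp add: edge_horizon_two intertwine_stationary lateral_eq p_def th_def y_def)
  ultimately have "edge 2 p th y 0 1 \<noteq> edge 2 p th y 1 0"
    by simp
  then show ?thesis
    by (intro exI[of _ 2] exI[of _ p] exI[of _ th] exI[of _ y] exI[of _ 0] exI[of _ 1]) simp
qed

end
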